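(* Let $g_X=(X,\psi_X,\varphi_X,\omega_X,\mu_X)$ and $g_Y=(Y,\psi_Y,\varphi_Y,\omega_Y,\mu_Y)$ be two elements of $\mathcal{G}$, let $p\in[1,\infty]$, $q\in[1,\infty)$, and $(\alpha,\beta)\in[0,1]^2$ with $\alpha+\beta\le1$. Then the functional $\Pi(\mu_X,\mu_Y)\to\mathbb{R}_+\cup\{+\infty\}$, $\mu\mapsto\mathcal{E}_{\alpha,\beta,q,p}(g_X,g_Y,\mu)$, is lower semicontinuous on $\Pi(\mu_X,\mu_Y)$ with respect to weak convergence of probability measures.
   Context: $\mathcal{G}$ is the set of tuples $(X,\psi_X,\varphi_X,\omega_X,\mu_X)$ where $X$ is a Polish space, $\psi_X:X\to\Psi$ is a bounded continuous measurable map into a fixed metric space $(\Psi,d_\Psi)$, $\varphi_X:X\times X\to\mathbb{R}$ is a bounded continuous measurable function, $\omega_X:X\times X\to\Omega$ is a bounded continuous measurable map into a fixed metric space $(\Omega,d_\Omega)$, and $\mu_X$ is a fully supported Borel probability measure on $X$. $\Pi(\mu_X,\mu_Y)$ is the set of Borel probability measures on $X\times Y$ with marginals $\mu_X,\mu_Y$. With $c((x,y),(x',y'))=(1-\alpha-\beta)\,d_\Psi(\psi_X(x),\psi_Y(y))^q+\alpha\, d_\Omega(\omega_X(x,x'),\omega_Y(y,y'))^q+\beta\,|\varphi_X(x,x')-\varphi_Y(y,y')|^q$, define $\mathcal{E}_{\alpha,\beta,q,p}(g_X,g_Y,\mu)=\left(\iint c^p\,d\mu\,d\mu\right)^{1/p}$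 for $p<\infty$ (for $p=\infty$, the $\mu\otimes\mu$-essential supremum of $c$). *)

theory Defs
  imports "HOL-Probability.Probability"
begin

text \<open>A network-like object g = (X, psi, phi, omega, mu) of the class G. The space X is the
  carrier type 'x (a Polish space); psi : X -> Psi, phi : X x X -> R, omega : X x X -> Omega.\<close>
definition in_G :: "('x::polish_space \<Rightarrow> 'p::metric_space) \<Rightarrow> ('x \<times> 'x \<Rightarrow> real)
    \<Rightarrow> ('x \<times> 'x \<Rightarrow> 'o::metric_space) \<Rightarrow> 'x measure \<Rightarrow> bool" where
  "in_G psi phi omega mu \<longleftrightarrow>
     continuous_on UNIV psi \<and> bounded (range psi) \<and> psi \<in> borel_measurable borel \<and>
     continuous_on UNIV phi \<and> bounded (range phi) \<and> phi \<in> borel_measurable borel \<and>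
     continuous_on UNIV omega \<and> bounded (range omega) \<and> omega \<in> borel_measurable borel \<and>
     prob_space mu \<and> sets mu = sets borel \<and>
     (\<forall>U. open U \<and> U \<noteq> {} \<longrightarrow> emeasure mu U > 0)"

definition couplings :: "'x::topological_space measure \<Rightarrow> 'y::topological_space measure
    \<Rightarrow> ('x \<times> 'y) measure set" where
  "couplings muX muY = {mu. prob_space mu \<and> sets mu = sets borel \<and>
      distr mu borel fst = muX \<and> distr mu borel snd = muY}"

definition weak_conv_metric :: "(nat \<Rightarrow> 'a::metric_space measure) \<Rightarrow> 'a measure \<Rightarrow> bool" where
  "weak_conv_metric Ms M \<longleftrightarrow> (\<forall>f::'a \<Rightarrow> real. continuous_on UNIV f \<and> bounded (range f) \<longrightarrow>
      (\<lambda>n. \<integral>x. f x \<partial>Ms n) \<longlonglongrightarrow> (\<integral>x. f x \<partial>M))"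

definition cost :: "real \<Rightarrow> real \<Rightarrow> real
    \<Rightarrow> ('x \<Rightarrow> 'p::metric_space) \<Rightarrow> ('x \<times> 'x \<Rightarrow> real) \<Rightarrow> ('x \<times> 'x \<Rightarrow> 'o::metric_space)
    \<Rightarrow> ('y \<Rightarrow> 'p) \<Rightarrow> ('y \<times> 'y \<Rightarrow> real) \<Rightarrow> ('y \<times> 'y \<Rightarrow> 'o)
    \<Rightarrow> ('x \<times> 'y) \<times> ('x \<times> 'y) \<Rightarrow> real" where
  "cost \<alpha> \<beta> q psiX phiX omegaX psiY phiY omegaY z =
     (case z of ((x, y), (x', y')) \<Rightarrow>
       (1 - \<alpha> - \<beta>) * dist (psiX x) (psiY y) powr q
       + \<alpha> * dist (omegaX (x, x')) (omegaY (y, y')) powr q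
       + \<beta> * \<bar>phiX (x, x') - phiY (y, y')\<bar> powr q)"

definition energy :: "real \<Rightarrow> real \<Rightarrow> real \<Rightarrow> ereal
    \<Rightarrow> ('x::topological_space \<Rightarrow> 'p::metric_space) \<Rightarrow> ('x \<times> 'x \<Rightarrow> real) \<Rightarrow> ('x \<times> 'x \<Rightarrow> 'o::metric_space)
    \<Rightarrow> ('y::topological_space \<Rightarrow> 'p) \<Rightarrow> ('y \<times> 'y \<Rightarrow> real) \<Rightarrow> ('y \<times> 'y \<Rightarrow> 'o)
    \<Rightarrow> ('x \<times> 'y) measure \<Rightarrow> ereal" where
  "energy \<alpha> \<beta> q p psiX phiX omegaX psiY phiY omegaY mu =
     (let c = cost \<alpha> \<beta> q psiX phiX omegaX psiY phiY omegaY in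
      if p = \<infinity> then esssup (mu \<Otimes>\<^sub>M mu) (\<lambda>z. ereal (c z))
      else (let I = (\<integral>\<^sup>+ z. ennreal (c z powr real_of_ereal p) \<partial>(mu \<Otimes>\<^sub>M mu)) in
            if I = \<infinity> then \<infinity> else ereal (enn2real I powr (1 / real_of_ereal p))))"

end

theory Submission
  imports Defs
begin

(* For p < \<infinity> the energy is an increasing function of the integral of c^p against mu x mu,
   and for p = \<infinity> the essential supremum of c exceeds t exactly when the integral of
   (c - t)^+ is positive. As the cost c is continuous, nonnegative and bounded, it suffices that
   mu \<mapsto> \<integral>F d(mu x mu) is lower semicontinuous along weakly convergent sequences of probability
   measures, for every bounded continuous F \<ge> 0.

   The tool is a Fatou lemma for weak convergence: if f z lies below the lower limit of g n w as
   w \<rightarrow> z and n \<rightarrow> \<infinity> jointly, then \<integral>f d mu \<le> liminf \<integral>g n d mu_n. It follows by applying weak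
   convergence to the continuous k-Lipschitz minorants of the tail infima inf_{n \<ge> k} g n, whose
   liminf dominates f. By Tonelli, \<integral>F d(mu x mu) = \<integral>h d mu with h x = \<integral>F(x, y) d mu(y). The
   Fatou lemma applied to the sections F(x', -) shows that h lies below the joint lower limit of
   h_n x' = \<integral>F(x', y) d mu_n(y), and applied once more it gives \<integral>h d mu \<le> liminf \<integral>h_n d mu_n. *)

lemma le_Liminf_nhds_sequentially_iff:
  fixes g :: "nat \<Rightarrow> 'a::metric_space \<Rightarrow> 'b::complete_linorder"
  shows "a \<le> Liminf (nhds z \<times>\<^sub>F sequentially) (\<lambda>(w, n). g n w) \<longleftrightarrow>
    (\<forall>e<a. \<exists>r>0. \<exists>N. \<forall>n\<ge>N. \<forall>w. dist w z < r \<longrightarrow> e < g n w)"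
proof -
  have "eventually (\<lambda>(w, n). e < g n w) (nhds z \<times>\<^sub>F sequentially) \<longleftrightarrow>
    (\<exists>r>0. \<exists>N. \<forall>n\<ge>N. \<forall>w. dist w z < r \<longrightarrow> e < g n w)" for e
  proof
    assume "eventually (\<lambda>(w, n). e < g n w) (nhds z \<times>\<^sub>F sequentially)"
    then obtain P Q where P: "eventually P (nhds z)" and Q: "eventually Q sequentially"
      and PQ: "\<And>w n. P w \<Longrightarrow> Q n \<Longrightarrow> e < g n w"
      unfolding eventually_prod_filter by auto
    from P obtain r where "r > 0" "\<And>w. dist w z < r \<Longrightarrow> P w"
      unfolding eventually_nhds_metric by blast
    moreover from Q obtain N where "\<And>n. n \<ge> N \<Longrightarrow> Q n"
      unfolding eventually_sequentially by blast
    ultimately show "\<exists>r>0. \<exists>N. \<forall>n\<ge>N. \<forall>w. dist w z < r \<longrightarrow> e < g n w"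
      using PQ by blast
  next
    assume "\<exists>r>0. \<exists>N. \<forall>n\<ge>N. \<forall>w. dist w z < r \<longrightarrow> e < g n w"
    then obtain r N where "r > 0" "\<And>n w. n \<ge> N \<Longrightarrow> dist w z < r \<Longrightarrow> e < g n w"
      by blast
    then show "eventually (\<lambda>(w, n). e < g n w) (nhds z \<times>\<^sub>F sequentially)"
      unfolding eventually_prod_filter eventually_nhds_metric eventually_sequentially
      by (intro exI[of _ "\<lambda>w. dist w z < r"] exI[of _ "\<lambda>n. n \<ge> N"]) auto
  qed
  then show ?thesis by (simp add: le_Liminf_iff case_prod_unfold)
qed

definition lipschitz_minorant :: "real \<Rightarrow> ('a::metric_space \<Rightarrow> real) \<Rightarrow> 'a \<Rightarrow> real" where
  "lipschitz_minorant k g z = (INF w. g w + k * dist w z)"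

context
  fixes k :: real and g :: "'a::metric_space \<Rightarrow> real"
  assumes g_nonneg: "\<And>w. 0 \<le> g w" and k_nonneg: "0 \<le> k"
begin

private lemma bdd_below_range: "bdd_below (range (\<lambda>w. g w + k * dist w z))"
  using g_nonneg k_nonneg by (intro bdd_belowI[of _ 0]) auto

lemma lipschitz_minorant_nonneg: "0 \<le> lipschitz_minorant k g z"
  unfolding lipschitz_minorant_def using g_nonneg k_nonneg by (intro cInf_greatest) auto

lemma lipschitz_minorant_le: "lipschitz_minorant k g z \<le> g z"
  using cInf_lower[OF rangeI bdd_below_range, of z z] by (simp add: lipschitz_minorant_def)

lemma lipschitz_minorant_lipschitz: "k-lipschitz_on UNIV (lipschitz_minorant k g)"
proof (rule lipschitz_onI)
  have le: "lipschitz_minorant k g z \<le> lipschitz_minorant k g z' + k * dist z z'" for z z'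
  proof -
    have "lipschitz_minorant k g z - k * dist z z' \<le> g w + k * dist w z'" for w
    proof -
      have "lipschitz_minorant k g z \<le> g w + k * dist w z"
        unfolding lipschitz_minorant_def by (rule cInf_lower[OF rangeI bdd_below_range])
      also have "\<dots> \<le> g w + k * dist w z' + k * dist z z'"
        using mult_left_mono[OF dist_triangle[of w z z'] k_nonneg]
        by (simp add: dist_commute algebra_simps)
      finally show ?thesis by simp
    qed
    then have "lipschitz_minorant k g z - k * dist z z' \<le> lipschitz_minorant k g z'"
      unfolding lipschitz_minorant_def[of _ _ z'] by (intro cInf_greatest) auto
    then show ?thesis by simp
  qed
  show "dist (lipschitz_minorant k g z) (lipschitz_minorant k g z') \<le> k * dist z z'" for z z'
    using le[of z z'] le[of z' z] by (simp add: dist_real_def dist_commute abs_le_iff)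
qed (rule k_nonneg)

lemma continuous_on_lipschitz_minorant: "continuous_on UNIV (lipschitz_minorant k g)"
  by (rule lipschitz_on_continuous_on[OF lipschitz_minorant_lipschitz])

lemma lipschitz_minorant_ge:
  assumes "\<And>w. dist w z < r \<Longrightarrow> t \<le> g w" and "t \<le> k * r"
  shows "t \<le> lipschitz_minorant k g z"
  unfolding lipschitz_minorant_def
proof (rule cInf_greatest)
  fix y assume "y \<in> range (\<lambda>w. g w + k * dist w z)"
  then obtain w where y: "y = g w + k * dist w z" by auto
  show "t \<le> y"
  proof (cases "dist w z < r")
    case True
    then show ?thesis using assms(1) k_nonneg y by (simp add: add_increasing2)
  next
    case False
    then have "k * r \<le> k * dist w z" using k_nonneg by (simp add: mult_left_mono)
    then show ?thesis using g_nonneg[of w] assms(2) y by linarith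
  qed
qed simp

end

definition tail_minorant :: "(nat \<Rightarrow> 'a::metric_space \<Rightarrow> ennreal) \<Rightarrow> nat \<Rightarrow> 'a \<Rightarrow> real" where
  "tail_minorant g k = lipschitz_minorant (real k) (\<lambda>w. enn2real (INF n\<in>{k..}. g n w))"

lemma tail_minorant_nonneg: "0 \<le> tail_minorant g k z"
  unfolding tail_minorant_def by (rule lipschitz_minorant_nonneg) simp_all

lemma continuous_on_tail_minorant: "continuous_on UNIV (tail_minorant g k)"
  unfolding tail_minorant_def by (rule continuous_on_lipschitz_minorant) simp_all

context
  fixes g :: "nat \<Rightarrow> 'a::metric_space \<Rightarrow> ennreal" and b :: ennreal
  assumes g_le: "\<And>n z. g n z \<le> b" and b_finite: "b < \<top>"
begin

private lemma ennreal_enn2real_INF_tail: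
  "ennreal (enn2real (INF n\<in>{k..}. g n z)) = (INF n\<in>{k..}. g n z)"
proof -
  have "(INF n\<in>{k..}. g n z) \<le> b" by (rule INF_lower2[of k]) (auto intro: g_le)
  then show ?thesis using b_finite by (simp add: le_less_trans)
qed

lemma tail_minorant_le: "k \<le> n \<Longrightarrow> ennreal (tail_minorant g k z) \<le> g n z"
proof -
  assume "k \<le> n"
  have "tail_minorant g k z \<le> enn2real (INF n\<in>{k..}. g n z)"
    unfolding tail_minorant_def by (rule lipschitz_minorant_le) simp_all
  then have "ennreal (tail_minorant g k z) \<le> (INF n\<in>{k..}. g n z)"
    using ennreal_leI ennreal_enn2real_INF_tail by metis
  also have "\<dots> \<le> g n z" using \<open>k \<le> n\<close> by (intro INF_lower) simp
  finally show ?thesis .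
qed

lemma tail_minorant_le_enn2real: "tail_minorant g k z \<le> enn2real b"
proof -
  have "ennreal (tail_minorant g k z) \<le> b"
    using tail_minorant_le[of k k z] g_le order_trans by blast
  then have "enn2real (ennreal (tail_minorant g k z)) \<le> enn2real b"
    by (rule enn2real_mono[OF _ b_finite])
  then show ?thesis using tail_minorant_nonneg[of g k z] by simp
qed

text \<open>Below the joint lower limit of g n w, the tail infima exceed some s on a whole ball of
  radius r around z for all large k; once k r \<ge> s, the Lipschitz minorant at z exceeds s too.\<close>
lemma le_liminf_tail_minorant:
  assumes f_le: "f z \<le> Liminf (nhds z \<times>\<^sub>F sequentially) (\<lambda>(w, n). g n w)"
  shows "f z \<le> liminf (\<lambda>k. ennreal (tail_minorant g k z))"
  unfolding le_Liminf_iff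
proof (intro allI impI)
  fix y assume "y < f z"
  then obtain y' where y': "y < y'" "y' < f z" using dense by blast
  then obtain r N where r: "r > 0" and rN: "\<And>n w. n \<ge> N \<Longrightarrow> dist w z < r \<Longrightarrow> y' < g n w"
    using f_le unfolding le_Liminf_nhds_sequentially_iff by blast
  have "y' < \<top>" using rN[of N z] r g_le b_finite by (simp add: order.strict_trans2)
  then obtain s where s: "0 \<le> s" "y' = ennreal s" by (cases y') auto
  obtain K :: nat where K: "s / r \<le> real K" by (meson real_arch_simple)
  show "\<forall>\<^sub>F k in sequentially. y < ennreal (tail_minorant g k z)"
  proof (rule eventually_sequentiallyI[of "max N K"])
    fix k assume k: "max N K \<le> k"
    have "s \<le> tail_minorant g k z" unfolding tail_minorant_def
    proof (rule lipschitz_minorant_ge)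
      show "s \<le> enn2real (INF n\<in>{k..}. g n w)" if "dist w z < r" for w
      proof -
        have "ennreal s \<le> (INF n\<in>{k..}. g n w)"
          using rN[OF _ that] k s by (intro INF_greatest less_imp_le) auto
        then show ?thesis
          using ennreal_enn2real_INF_tail by (metis ennreal_le_iff enn2real_nonneg)
      qed
      have "s \<le> r * real K" using K r by (simp add: field_simps)
      also have "\<dots> \<le> r * real k" using k r by (intro mult_left_mono) auto
      finally show "s \<le> real k * r" by (simp add: mult.commute)
    qed simp_all
    then show "y < ennreal (tail_minorant g k z)"
      using y'(1) s by (simp add: ennreal_leI order.strict_trans2)
  qed
qed

end

lemma nn_integral_eq_integral_bounded:
  assumes N: "prob_space N" "sets N = sets borel"
    and g: "continuous_on UNIV g" "\<And>x. 0 \<le> g x" "\<And>x. g x \<le> B"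
  shows "(\<integral>\<^sup>+x. ennreal (g x) \<partial>N) = ennreal (\<integral>x. g x \<partial>N)"
proof -
  interpret N: prob_space N by (rule N(1))
  have "g \<in> borel_measurable N"
    using measurable_cong_sets[OF N(2) refl] borel_measurable_continuous_onI[OF g(1)] by blast
  then have "integrable N g"
    by (intro N.integrable_const_bound[of _ B]) (use g in auto)
  then show ?thesis by (intro nn_integral_eq_integral) (auto simp: g)
qed

locale weak_conv_probs =
  fixes Ms :: "nat \<Rightarrow> 'a::metric_space measure" and M :: "'a measure"
  assumes weak_conv: "weak_conv_metric Ms M"
    and prob_Ms: "\<And>n. prob_space (Ms n)" and sets_Ms: "\<And>n. sets (Ms n) = sets borel"
    and prob_M: "prob_space M" and sets_M: "sets M = sets borel"

lemma weak_conv_metric_reindex: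
  assumes "weak_conv_metric Ms M" and "filterlim r sequentially sequentially"
  shows "weak_conv_metric (\<lambda>k. Ms (r k)) M"
  using assms(1) filterlim_compose[OF _ assms(2)] unfolding weak_conv_metric_def by blast

lemma weak_conv_probs_reindex:
  assumes "weak_conv_probs Ms M" and "filterlim r sequentially sequentially"
  shows "weak_conv_probs (\<lambda>k. Ms (r k)) M"
  using assms(1) weak_conv_metric_reindex[OF _ assms(2)] unfolding weak_conv_probs_def by blast

context weak_conv_probs
begin

lemma weak_conv_nn_integral_tendsto:
  assumes g: "continuous_on UNIV g" "\<And>x. 0 \<le> g x" "\<And>x. g x \<le> B"
  shows "(\<lambda>n. \<integral>\<^sup>+x. ennreal (g x) \<partial>Ms n) \<longlonglongrightarrow> (\<integral>\<^sup>+x. ennreal (g x) \<partial>M)"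
proof -
  have "bounded (range g)"
    unfolding bounded_real using g(2,3) abs_of_nonneg by fastforce
  then have "(\<lambda>n. \<integral>x. g x \<partial>Ms n) \<longlonglongrightarrow> (\<integral>x. g x \<partial>M)"
    using weak_conv g(1) unfolding weak_conv_metric_def by blast
  then show ?thesis
    by (simp add: nn_integral_eq_integral_bounded[OF prob_Ms sets_Ms g]
        nn_integral_eq_integral_bounded[OF prob_M sets_M g])
qed

lemma nn_integral_liminf_le_weak_conv:
  assumes H: "\<And>k. continuous_on UNIV (H k)" "\<And>k z. 0 \<le> H k z" "\<And>k z. H k z \<le> B"
    and H_le: "\<And>k n z. k \<le> n \<Longrightarrow> ennreal (H k z) \<le> g n z"
  shows "(\<integral>\<^sup>+z. liminf (\<lambda>k. ennreal (H k z)) \<partial>M) \<le> liminf (\<lambda>n. \<integral>\<^sup>+z. g n z \<partial>Ms n)"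
proof -
  have "(\<integral>\<^sup>+z. ennreal (H k z) \<partial>M) \<le> liminf (\<lambda>n. \<integral>\<^sup>+z. g n z \<partial>Ms n)" for k
  proof -
    have "(\<integral>\<^sup>+z. ennreal (H k z) \<partial>M) = liminf (\<lambda>n. \<integral>\<^sup>+z. ennreal (H k z) \<partial>Ms n)"
      by (intro lim_imp_Liminf[symmetric] weak_conv_nn_integral_tendsto[OF H(1,2,3)]) simp
    also have "\<dots> \<le> liminf (\<lambda>n. \<integral>\<^sup>+z. g n z \<partial>Ms n)"
      by (intro Liminf_mono eventually_sequentiallyI[of k] nn_integral_mono H_le)
    finally show ?thesis .
  qed
  then have "liminf (\<lambda>k. \<integral>\<^sup>+z. ennreal (H k z) \<partial>M) \<le> liminf (\<lambda>n. \<integral>\<^sup>+z. g n z \<partial>Ms n)"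
    by (intro Liminf_le) simp_all
  moreover have "(\<lambda>z. ennreal (H k z)) \<in> borel_measurable M" for k
    using measurable_cong_sets[OF sets_M refl]
      borel_measurable_continuous_onI[OF continuous_on_ennreal[OF H(1)]] by blast
  then have "(\<integral>\<^sup>+z. liminf (\<lambda>k. ennreal (H k z)) \<partial>M) \<le> liminf (\<lambda>k. \<integral>\<^sup>+z. ennreal (H k z) \<partial>M)"
    by (rule nn_integral_liminf)
  ultimately show ?thesis by (rule order_trans[rotated])
qed

lemma nn_integral_le_Liminf_weak_conv:
  fixes g :: "nat \<Rightarrow> 'a \<Rightarrow> ennreal"
  assumes g_le: "\<And>n z. g n z \<le> b" "b < \<top>"
    and f_le: "\<And>z. f z \<le> Liminf (nhds z \<times>\<^sub>F sequentially) (\<lambda>(w, n). g n w)"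
  shows "(\<integral>\<^sup>+z. f z \<partial>M) \<le> liminf (\<lambda>n. \<integral>\<^sup>+z. g n z \<partial>Ms n)"
proof -
  have "(\<integral>\<^sup>+z. f z \<partial>M) \<le> (\<integral>\<^sup>+z. liminf (\<lambda>k. ennreal (tail_minorant g k z)) \<partial>M)"
    by (intro nn_integral_mono le_liminf_tail_minorant[OF g_le f_le])
  also have "\<dots> \<le> liminf (\<lambda>n. \<integral>\<^sup>+z. g n z \<partial>Ms n)"
    by (rule nn_integral_liminf_le_weak_conv[OF continuous_on_tail_minorant tail_minorant_nonneg
          tail_minorant_le_enn2real[OF g_le] tail_minorant_le[OF g_le]])
  finally show ?thesis .
qed

lemma nn_integral_section_le_Liminf_weak_conv:
  fixes F :: "'b::metric_space \<times> 'a \<Rightarrow> real"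
  assumes F: "continuous_on UNIV F" "\<And>z. 0 \<le> F z" "\<And>z. F z \<le> B"
  shows "(\<integral>\<^sup>+y. ennreal (F (x, y)) \<partial>M)
    \<le> Liminf (nhds x \<times>\<^sub>F sequentially) (\<lambda>(x', n). \<integral>\<^sup>+y. ennreal (F (x', y)) \<partial>Ms n)"
  unfolding le_Liminf_nhds_sequentially_iff
proof (intro allI impI, rule ccontr)
  fix e assume e: "e < (\<integral>\<^sup>+y. ennreal (F (x, y)) \<partial>M)"
    and "\<not> (\<exists>r>0. \<exists>N. \<forall>n\<ge>N. \<forall>x'. dist x' x < r \<longrightarrow> e < (\<integral>\<^sup>+y. ennreal (F (x', y)) \<partial>Ms n))"
  \<comment> \<open>Pick n k \<ge> k and x' k \<rightarrow> x along which the sections stay below e; the Fatou lemma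
    for the reindexed sequence then bounds the section at x by e as well.\<close>
  then have "\<forall>k. \<exists>n\<ge>k. \<exists>x'. dist x' x < inverse (real (Suc k))
      \<and> (\<integral>\<^sup>+y. ennreal (F (x', y)) \<partial>Ms n) \<le> e"
    by (metis not_less of_nat_0_less_iff positive_imp_inverse_positive zero_less_Suc)
  then obtain n x' where n: "\<And>k. k \<le> n k" and x': "\<And>k. dist (x' k) x < inverse (real (Suc k))"
    and le_e: "\<And>k. (\<integral>\<^sup>+y. ennreal (F (x' k, y)) \<partial>Ms (n k)) \<le> e"
    by metis
  have n_lim: "filterlim n sequentially sequentially"
    unfolding filterlim_at_top using n by (auto intro: eventually_sequentiallyI order_trans)
  have "dist (x' k) x \<le> dist (inverse (real (Suc k))) 0" for k
    using x'[of k] by simp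
  then have "x' \<longlonglongrightarrow> x"
    by (intro metric_tendsto_imp_tendsto[OF LIMSEQ_inverse_real_of_nat] always_eventually allI)
  then have "((\<lambda>(y', k). (x' k, y')) \<longlongrightarrow> (x, y)) (nhds y \<times>\<^sub>F sequentially)" for y :: 'a
    unfolding case_prod_unfold
    by (intro tendsto_Pair filterlim_compose[OF _ filterlim_snd] filterlim_fst)
  then have sections_tendsto:
    "((\<lambda>(y', k). ennreal (F (x' k, y'))) \<longlongrightarrow> ennreal (F (x, y))) (nhds y \<times>\<^sub>F sequentially)" for y
    using F(1) unfolding case_prod_unfold
    by (intro tendsto_ennrealI isCont_tendsto_compose[where g = F])
      (simp_all add: continuous_on_eq_continuous_at)
  have lower_limit:
    "ennreal (F (x, y)) \<le> Liminf (nhds y \<times>\<^sub>F sequentially) (\<lambda>(y', k). ennreal (F (x' k, y')))" for y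
    using lim_imp_Liminf[OF _ sections_tendsto] by (simp add: prod_filter_eq_bot)
  interpret reindexed: weak_conv_probs "\<lambda>k. Ms (n k)" M
    by (rule weak_conv_probs_reindex[OF weak_conv_probs_axioms n_lim])
  have "(\<integral>\<^sup>+y. ennreal (F (x, y)) \<partial>M) \<le> liminf (\<lambda>k. \<integral>\<^sup>+y. ennreal (F (x' k, y)) \<partial>Ms (n k))"
    by (intro reindexed.nn_integral_le_Liminf_weak_conv[where b = "ennreal B"] lower_limit)
      (simp_all add: F(3) ennreal_leI)
  also have "\<dots> \<le> e"
    using le_e by (intro Liminf_le) simp_all
  finally show False using e by simp
qed

end

lemma borel_measurable_pair_measure_borel:
  fixes f :: "'a::second_countable_topology \<times> 'b::second_countable_topology \<Rightarrow> 'c::topological_space"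
  assumes "sets M = sets borel" "sets N = sets borel" "f \<in> borel_measurable borel"
  shows "f \<in> borel_measurable (M \<Otimes>\<^sub>M N)"
proof -
  have "sets (M \<Otimes>\<^sub>M N) = sets (borel \<Otimes>\<^sub>M borel)"
    by (rule sets_pair_measure_cong) (use assms in auto)
  also have "\<dots> = sets (borel :: ('a \<times> 'b) measure)" by (rule arg_cong[where f=sets, OF borel_prod])
  finally show ?thesis using measurable_cong_sets[OF _ refl] assms(3) by blast
qed

lemma nn_integral_excess_eq_0_iff_esssup_le:
  fixes c :: "'a \<Rightarrow> real"
  assumes "c \<in> borel_measurable M"
  shows "(\<integral>\<^sup>+z. ennreal (c z - t) \<partial>M) = 0 \<longleftrightarrow> esssup M (\<lambda>z. ereal (c z)) \<le> ereal t"
proof -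
  have "(\<integral>\<^sup>+z. ennreal (c z - t) \<partial>M) = 0 \<longleftrightarrow> (AE z in M. c z \<le> t)"
    using assms by (subst nn_integral_0_iff_AE) (auto simp: ennreal_eq_0_iff)
  also have "\<dots> \<longleftrightarrow> esssup M (\<lambda>z. ereal (c z)) \<le> ereal t"
  proof
    assume "AE z in M. c z \<le> t"
    then show "esssup M (\<lambda>z. ereal (c z)) \<le> ereal t" using assms by (intro esssup_I) auto
  next
    assume le: "esssup M (\<lambda>z. ereal (c z)) \<le> ereal t"
    show "AE z in M. c z \<le> t"
    proof (rule eventually_mono[OF esssup_AE])
      fix z assume "ereal (c z) \<le> esssup M (\<lambda>z. ereal (c z))"
      then have "ereal (c z) \<le> ereal t" using le by (rule order_trans)
      then show "c z \<le> t" by simp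
    qed
  qed
  finally show ?thesis .
qed

lemma esssup_le_Liminf_of_excess_integrals:
  fixes c :: "'a \<Rightarrow> real"
  assumes "c \<in> borel_measurable M" "\<And>n. c \<in> borel_measurable (Ms n)"
    and excess: "\<And>t. (\<integral>\<^sup>+z. ennreal (c z - t) \<partial>M) \<le> liminf (\<lambda>n. \<integral>\<^sup>+z. ennreal (c z - t) \<partial>Ms n)"
  shows "esssup M (\<lambda>z. ereal (c z)) \<le> liminf (\<lambda>n. esssup (Ms n) (\<lambda>z. ereal (c z)))"
  unfolding le_Liminf_iff
proof (intro allI impI)
  fix y assume "y < esssup M (\<lambda>z. ereal (c z))"
  then obtain t where t: "y < ereal t" "ereal t < esssup M (\<lambda>z. ereal (c z))"
    using ereal_dense2 by blast
  then have "0 < (\<integral>\<^sup>+z. ennreal (c z - t) \<partial>M)"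
    using nn_integral_excess_eq_0_iff_esssup_le[OF assms(1)]
    by (simp add: not_le zero_less_iff_neq_zero)
  then have "0 < liminf (\<lambda>n. \<integral>\<^sup>+z. ennreal (c z - t) \<partial>Ms n)"
    using excess by (rule less_le_trans)
  then have "eventually (\<lambda>n. 0 < (\<integral>\<^sup>+z. ennreal (c z - t) \<partial>Ms n)) sequentially"
    by (rule less_LiminfD)
  then show "eventually (\<lambda>n. y < esssup (Ms n) (\<lambda>z. ereal (c z))) sequentially"
  proof eventually_elim
    case (elim n)
    then have "ereal t < esssup (Ms n) (\<lambda>z. ereal (c z))"
      using nn_integral_excess_eq_0_iff_esssup_le[OF assms(2)]
      by (simp add: not_le zero_less_iff_neq_zero)
    then show ?case by (rule less_trans[OF t(1)])
  qed
qed

lemma ereal_enn2real_powr_le_Liminf: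
  assumes "I \<le> liminf Is" "I < \<top>" "\<And>n. Is n < \<top>" "0 < r"
  shows "ereal (enn2real I powr r) \<le> liminf (\<lambda>n. ereal (enn2real (Is n) powr r))"
  unfolding le_Liminf_iff
proof (intro allI impI)
  fix y assume y: "y < ereal (enn2real I powr r)"
  show "eventually (\<lambda>n. y < ereal (enn2real (Is n) powr r)) sequentially"
  proof (cases "y < 0")
    case True
    then show ?thesis by (intro always_eventually allI) (auto intro: less_le_trans)
  next
    case False
    then obtain u where u: "y = ereal u" "0 \<le> u" using y by (cases y) auto
    have root: "(u powr (1 / r)) powr r = u" using u(2) assms(4) by (simp add: powr_powr)
    have "u powr (1 / r) < enn2real I"
    proof (rule ccontr)
      assume "\<not> u powr (1 / r) < enn2real I"
      then have "enn2real I powr r \<le> (u powr (1 / r)) powr r"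
        using assms(4) by (intro powr_mono2) auto
      then show False using y u root by simp
    qed
    then have "ennreal (u powr (1 / r)) < ennreal (enn2real I)"
      by (simp add: ennreal_less_iff)
    then have "ennreal (u powr (1 / r)) < liminf Is"
      using assms(1,2) by simp
    then have "eventually (\<lambda>n. ennreal (u powr (1 / r)) < Is n) sequentially"
      by (rule less_LiminfD)
    then show ?thesis
    proof eventually_elim
      case (elim n)
      then have "ennreal (u powr (1 / r)) < ennreal (enn2real (Is n))"
        using assms(3)[of n] by simp
      then have "u powr (1 / r) < enn2real (Is n)"
        by (simp add: ennreal_less_iff)
      then have "(u powr (1 / r)) powr r < enn2real (Is n) powr r"
        using assms(4) by (intro powr_less_mono2) auto
      then show ?case using u root by simp
    qed
  qed
qed

lemma nn_integral_bounded_less_top: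
  assumes "prob_space N" "\<And>z. f z \<le> B"
  shows "(\<integral>\<^sup>+z. ennreal (f z) \<partial>N) < \<top>"
proof -
  interpret prob_space N by (rule assms(1))
  have "(\<integral>\<^sup>+z. ennreal (f z) \<partial>N) \<le> ennreal B"
    using assms(2) by (intro nn_integral_le_const AE_I2 ennreal_leI) auto
  then show ?thesis by (simp add: le_less_trans)
qed

lemma nn_integral_pair_le_Liminf_weak_conv:
  fixes Ms :: "nat \<Rightarrow> 'a::{metric_space, second_countable_topology} measure"
  assumes "weak_conv_probs Ms M"
    and F: "continuous_on UNIV F" "\<And>z. 0 \<le> F z" "\<And>z. F z \<le> B"
  shows "(\<integral>\<^sup>+z. ennreal (F z) \<partial>(M \<Otimes>\<^sub>M M))
    \<le> liminf (\<lambda>n. \<integral>\<^sup>+z. ennreal (F z) \<partial>(Ms n \<Otimes>\<^sub>M Ms n))"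
proof -
  interpret weak_conv_probs Ms M by (rule assms(1))
  have iterated: "(\<integral>\<^sup>+z. ennreal (F z) \<partial>(N \<Otimes>\<^sub>M N)) = (\<integral>\<^sup>+x. \<integral>\<^sup>+y. ennreal (F (x, y)) \<partial>N \<partial>N)"
    if "prob_space N" "sets N = sets borel" for N
  proof -
    have "(\<lambda>z. ennreal (F z)) \<in> borel_measurable (N \<Otimes>\<^sub>M N)"
      using F(1) that(2)
      by (intro borel_measurable_pair_measure_borel borel_measurable_continuous_onI
          continuous_on_ennreal)
    then show ?thesis
      by (rule sigma_finite_measure.nn_integral_fst[OF prob_space_imp_sigma_finite[OF that(1)],
            symmetric])
  qed
  have section_bounded: "(\<integral>\<^sup>+y. ennreal (F (x, y)) \<partial>Ms n) \<le> ennreal B" for n x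
    using prob_space_imp_subprob_space[OF prob_Ms]
    by (intro subprob_space.nn_integral_le_const AE_I2 ennreal_leI F(3)) simp_all
  have "(\<integral>\<^sup>+x. \<integral>\<^sup>+y. ennreal (F (x, y)) \<partial>M \<partial>M)
      \<le> liminf (\<lambda>n. \<integral>\<^sup>+x. \<integral>\<^sup>+y. ennreal (F (x, y)) \<partial>Ms n \<partial>Ms n)"
    by (intro nn_integral_le_Liminf_weak_conv[where b = "ennreal B"]
        nn_integral_section_le_Liminf_weak_conv[OF F] section_bounded) simp
  then show ?thesis by (simp add: iterated prob_Ms sets_Ms prob_M sets_M)
qed

lemma esssup_pair_le_Liminf_weak_conv:
  fixes Ms :: "nat \<Rightarrow> 'a::{metric_space, second_countable_topology} measure"
  assumes probs: "weak_conv_probs Ms M"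
    and c: "continuous_on UNIV c" "\<And>z. c z \<le> B"
  shows "esssup (M \<Otimes>\<^sub>M M) (\<lambda>z. ereal (c z)) \<le> liminf (\<lambda>n. esssup (Ms n \<Otimes>\<^sub>M Ms n) (\<lambda>z. ereal (c z)))"
proof (rule esssup_le_Liminf_of_excess_integrals)
  interpret weak_conv_probs Ms M by (rule probs)
  have c_measurable: "c \<in> borel_measurable (N \<Otimes>\<^sub>M N)" if "sets N = sets borel" for N :: "'a measure"
    using that by (intro borel_measurable_pair_measure_borel borel_measurable_continuous_onI c(1))
  show "c \<in> borel_measurable (M \<Otimes>\<^sub>M M)" "c \<in> borel_measurable (Ms n \<Otimes>\<^sub>M Ms n)" for n
    using c_measurable sets_M sets_Ms by blast+
  fix t
  have "max 0 (c z - t) \<le> \<bar>B\<bar> + \<bar>t\<bar>" for z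
    using c(2)[of z] by (auto simp: max_def abs_if)
  then have "(\<integral>\<^sup>+z. ennreal (max 0 (c z - t)) \<partial>(M \<Otimes>\<^sub>M M))
      \<le> liminf (\<lambda>n. \<integral>\<^sup>+z. ennreal (max 0 (c z - t)) \<partial>(Ms n \<Otimes>\<^sub>M Ms n))"
    by (intro nn_integral_pair_le_Liminf_weak_conv[OF probs,
          where B = "\<bar>B\<bar> + \<bar>t\<bar>"] continuous_intros c(1)) auto
  then show "(\<integral>\<^sup>+z. ennreal (c z - t) \<partial>(M \<Otimes>\<^sub>M M))
      \<le> liminf (\<lambda>n. \<integral>\<^sup>+z. ennreal (c z - t) \<partial>(Ms n \<Otimes>\<^sub>M Ms n))"
    by simp
qed

lemma powr_nn_integral_pair_le_Liminf_weak_conv: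
  fixes Ms :: "nat \<Rightarrow> 'a::{metric_space, second_countable_topology} measure"
  assumes probs: "weak_conv_probs Ms M"
    and c: "continuous_on UNIV c" "\<And>z. 0 \<le> c z" "\<And>z. c z \<le> B" and r: "0 < r"
  shows "ereal (enn2real (\<integral>\<^sup>+z. ennreal (c z powr r) \<partial>(M \<Otimes>\<^sub>M M)) powr (1 / r))
    \<le> liminf (\<lambda>n. ereal (enn2real (\<integral>\<^sup>+z. ennreal (c z powr r) \<partial>(Ms n \<Otimes>\<^sub>M Ms n)) powr (1 / r)))"
proof (rule ereal_enn2real_powr_le_Liminf)
  interpret weak_conv_probs Ms M by (rule probs)
  have c_powr_le: "c z powr r \<le> B powr r" for z
    using c r by (intro powr_mono2) auto
  show "(\<integral>\<^sup>+z. ennreal (c z powr r) \<partial>(M \<Otimes>\<^sub>M M))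
      \<le> liminf (\<lambda>n. \<integral>\<^sup>+z. ennreal (c z powr r) \<partial>(Ms n \<Otimes>\<^sub>M Ms n))"
    using c r c_powr_le
    by (intro nn_integral_pair_le_Liminf_weak_conv[OF probs]
        continuous_on_powr') auto
  show "(\<integral>\<^sup>+z. ennreal (c z powr r) \<partial>(M \<Otimes>\<^sub>M M)) < \<top>"
    "(\<integral>\<^sup>+z. ennreal (c z powr r) \<partial>(Ms n \<Otimes>\<^sub>M Ms n)) < \<top>" for n
    using c_powr_le prob_M prob_Ms
    by (auto intro!: nn_integral_bounded_less_top prob_space_pair)
qed (use r in simp)

lemma cost_eq_fst_snd:
  "cost \<alpha> \<beta> q psiX phiX omegaX psiY phiY omegaY z =
     (1 - \<alpha> - \<beta>) * dist (psiX (fst (fst z))) (psiY (snd (fst z))) powr q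
     + \<alpha> * dist (omegaX (fst (fst z), fst (snd z))) (omegaY (snd (fst z), snd (snd z))) powr q
     + \<beta> * \<bar>phiX (fst (fst z), fst (snd z)) - phiY (snd (fst z), snd (snd z))\<bar> powr q"
  by (cases z) (auto simp: cost_def)

lemma cost_nonneg:
  assumes "0 \<le> \<alpha>" "0 \<le> \<beta>" "\<alpha> + \<beta> \<le> 1"
  shows "0 \<le> cost \<alpha> \<beta> q psiX phiX omegaX psiY phiY omegaY z"
  unfolding cost_eq_fst_snd using assms by (intro add_nonneg_nonneg mult_nonneg_nonneg) auto

lemma continuous_on_cost:
  fixes psiX :: "'x::topological_space \<Rightarrow> 'p::metric_space" and phiX :: "'x \<times> 'x \<Rightarrow> real"
    and omegaX :: "'x \<times> 'x \<Rightarrow> 'o::metric_space"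
    and psiY :: "'y::topological_space \<Rightarrow> 'p" and phiY :: "'y \<times> 'y \<Rightarrow> real"
    and omegaY :: "'y \<times> 'y \<Rightarrow> 'o"
  assumes "continuous_on UNIV psiX" "continuous_on UNIV phiX" "continuous_on UNIV omegaX"
    and "continuous_on UNIV psiY" "continuous_on UNIV phiY" "continuous_on UNIV omegaY"
    and "0 < q"
  shows "continuous_on UNIV (cost \<alpha> \<beta> q psiX phiX omegaX psiY phiY omegaY)"
proof -
  have powr_q: "continuous_on UNIV (\<lambda>z. f z powr q)"
    if "continuous_on UNIV f" "\<And>z. 0 \<le> f z" for f :: "('x \<times> 'y) \<times> ('x \<times> 'y) \<Rightarrow> real"
    using that assms(7) by (intro continuous_on_powr') auto
  show ?thesis
    unfolding cost_eq_fst_snd[abs_def]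
    by (intro continuous_intros powr_q continuous_on_compose2[OF assms(1)]
        continuous_on_compose2[OF assms(2)] continuous_on_compose2[OF assms(3)]
        continuous_on_compose2[OF assms(4)] continuous_on_compose2[OF assms(5)]
        continuous_on_compose2[OF assms(6)]) auto
qed

lemma dist_le_diameter_range_Un:
  assumes "bounded (range f)" "bounded (range g)"
  shows "dist (f u) (g v) \<le> diameter (range f \<union> range g)"
  using assms by (intro diameter_bounded_bound) auto

lemma cost_bounded:
  assumes "bounded (range psiX)" "bounded (range phiX)" "bounded (range omegaX)"
    and "bounded (range psiY)" "bounded (range phiY)" "bounded (range omegaY)"
    and "0 \<le> \<alpha>" "0 \<le> \<beta>" "\<alpha> + \<beta> \<le> 1" "0 \<le> q"
  obtains B where "\<And>z. cost \<alpha> \<beta> q psiX phiX omegaX psiY phiY omegaY z \<le> B"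
proof -
  have powr_le: "d powr q \<le> D powr q" if "d \<le> D" "0 \<le> d" for d D
    using that assms(10) by (intro powr_mono2) auto
  show ?thesis
  proof (rule that)
    fix z
    show "cost \<alpha> \<beta> q psiX phiX omegaX psiY phiY omegaY z
      \<le> (1 - \<alpha> - \<beta>) * diameter (range psiX \<union> range psiY) powr q
        + \<alpha> * diameter (range omegaX \<union> range omegaY) powr q
        + \<beta> * diameter (range phiX \<union> range phiY) powr q"
      unfolding cost_eq_fst_snd
      by (intro add_mono mult_left_mono powr_le dist_le_diameter_range_Un[of psiX psiY]
          dist_le_diameter_range_Un[of omegaX omegaY]
          dist_le_diameter_range_Un[of phiX phiY, unfolded dist_real_def])
        (use assms in auto)
  qed
qed

lemma energy_le_Liminf_weak_conv:
  fixes Ms :: "nat \<Rightarrow> ('x::{metric_space, second_countable_topology} \<times>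
      'y::{metric_space, second_countable_topology}) measure"
  assumes probs: "weak_conv_probs Ms M"
    and c: "continuous_on UNIV (cost \<alpha> \<beta> q psiX phiX omegaX psiY phiY omegaY)"
      "\<And>z. 0 \<le> cost \<alpha> \<beta> q psiX phiX omegaX psiY phiY omegaY z"
      "\<And>z. cost \<alpha> \<beta> q psiX phiX omegaX psiY phiY omegaY z \<le> B"
    and p: "0 < p"
  shows "energy \<alpha> \<beta> q p psiX phiX omegaX psiY phiY omegaY M
    \<le> liminf (\<lambda>n. energy \<alpha> \<beta> q p psiX phiX omegaX psiY phiY omegaY (Ms n))"
proof (cases "p = \<infinity>")
  case True
  then show ?thesis
    using esssup_pair_le_Liminf_weak_conv[OF probs c(1,3)] by (simp add: energy_def)
next
  case False
  define r where "r = real_of_ereal p"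
  have r: "0 < r" using p False unfolding r_def by (cases p) auto
  have "energy \<alpha> \<beta> q p psiX phiX omegaX psiY phiY omegaY N
      = ereal (enn2real (\<integral>\<^sup>+z. ennreal (cost \<alpha> \<beta> q psiX phiX omegaX psiY phiY omegaY z powr r)
          \<partial>(N \<Otimes>\<^sub>M N)) powr (1 / r))"
    if "prob_space N" for N
  proof -
    have "(\<integral>\<^sup>+z. ennreal (cost \<alpha> \<beta> q psiX phiX omegaX psiY phiY omegaY z powr r)
        \<partial>(N \<Otimes>\<^sub>M N)) < \<top>"
      using c(2,3) r
      by (intro nn_integral_bounded_less_top[where B = "B powr r"] prob_space_pair that powr_mono2)
        auto
    then show ?thesis using False by (simp add: energy_def r_def Let_def)
  qed
  then show ?thesis
    using powr_nn_integral_pair_le_Liminf_weak_conv[OF probs c r] probs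
    by (simp add: weak_conv_probs_def)
qed

theorem mainTheorem2:
  fixes psiX :: "'x::polish_space \<Rightarrow> 'p::metric_space" and phiX :: "'x \<times> 'x \<Rightarrow> real"
    and omegaX :: "'x \<times> 'x \<Rightarrow> 'o::metric_space" and muX :: "'x measure"
    and psiY :: "'y::polish_space \<Rightarrow> 'p" and phiY :: "'y \<times> 'y \<Rightarrow> real"
    and omegaY :: "'y \<times> 'y \<Rightarrow> 'o" and muY :: "'y measure"
    and p :: ereal and q \<alpha> \<beta> :: real
  assumes gX: "in_G psiX phiX omegaX muX"
    and gY: "in_G psiY phiY omegaY muY"
    and p: "1 \<le> p"
    and q: "1 \<le> q"
    and ab: "0 \<le> \<alpha>" "\<alpha> \<le> 1" "0 \<le> \<beta>" "\<beta> \<le> 1" "\<alpha> + \<beta> \<le> 1"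
  shows "\<forall>mus mu. (\<forall>n. mus n \<in> couplings muX muY) \<and> mu \<in> couplings muX muY \<and> weak_conv_metric mus mu
     \<longrightarrow> energy \<alpha> \<beta> q p psiX phiX omegaX psiY phiY omegaY mu
         \<le> liminf (\<lambda>n. energy \<alpha> \<beta> q p psiX phiX omegaX psiY phiY omegaY (mus n))"
proof (intro allI impI, elim conjE)
  fix mus mu
  assume "\<forall>n. mus n \<in> couplings muX muY" "mu \<in> couplings muX muY" "weak_conv_metric mus mu"
  then have probs: "weak_conv_probs mus mu"
    by (auto simp: weak_conv_probs_def couplings_def)
  have "continuous_on UNIV (cost \<alpha> \<beta> q psiX phiX omegaX psiY phiY omegaY)"
    using gX gY q unfolding in_G_def by (intro continuous_on_cost) auto
  moreover have "\<And>z. 0 \<le> cost \<alpha> \<beta> q psiX phiX omegaX psiY phiY omegaY z"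
    using ab by (intro cost_nonneg) auto
  moreover obtain B where "\<And>z. cost \<alpha> \<beta> q psiX phiX omegaX psiY phiY omegaY z \<le> B"
    by (rule cost_bounded[of psiX phiX omegaX psiY phiY omegaY \<alpha> \<beta> q])
      (use gX gY q ab in \<open>auto simp: in_G_def\<close>)
  moreover have "0 < p" using p by (cases p) auto
  ultimately show "energy \<alpha> \<beta> q p psiX phiX omegaX psiY phiY omegaY mu
      \<le> liminf (\<lambda>n. energy \<alpha> \<beta> q p psiX phiX omegaX psiY phiY omegaY (mus n))"
    by (rule energy_le_Liminf_weak_conv[OF probs])
qed

end
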